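(* Let $R$ be a commutative ring with unit, $M$ an $R$-module, $\mathbf A$ a $k\times l$ matrix with entries in $R$, and $r\ge1$ an integer. (1) If $S\subseteq R$ is a multiplicative subset containing no zero divisors on $M$ (i.e. $sm=0$ with $s\in S$, $m\in M$ implies $m=0$), then $\mathbf A$ is partition regular over $M$ for $r$ colours if and only if it is partition regular over $S^{-1}M$ for $r$ colours. (2) If $R$ is an integral domain with fraction field $K$, then $\mathbf A$ is partition regular over $R$ for $r$ colours if and only if it is partition regular over $K$ (as an $R$-module) for $r$ colours.
   Context: $\mathbf{A}$ is partition regular over an $R$-module $N$ for $r$ colours if for every map $\chi\colon N\to\{1,\dots,r\}$ there is $\mathbf{n}=(n_1,\dots,n_l)^{\intercal}\in N^l$ with $\mathbf{A}\mathbf{n}=0$, $\mathbf{n}\neq 0$ and $\chi(n_1)=\dots=\chi(n_l)$. *)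

theory Defs
  imports Main "HOL.Modules" "HOL-Computational_Algebra.Fraction_Field"
begin

text \<open>An R-module is given abstractly by a carrier set N, a zero, an addition and a
  scalar multiplication.\<close>

definition lincomb :: "('e \<Rightarrow> 'e \<Rightarrow> 'e) \<Rightarrow> 'e \<Rightarrow> ('r \<Rightarrow> 'e \<Rightarrow> 'e)
    \<Rightarrow> (nat \<Rightarrow> nat \<Rightarrow> 'r) \<Rightarrow> nat \<Rightarrow> (nat \<Rightarrow> 'e) \<Rightarrow> nat \<Rightarrow> 'e" where
  "lincomb add z sc A i n l = foldr (\<lambda>j acc. add (sc (A i j) (n j)) acc) [0..<l] z"

definition partition_regular ::
  "'e set \<Rightarrow> 'e \<Rightarrow> ('e \<Rightarrow> 'e \<Rightarrow> 'e) \<Rightarrow> ('r \<Rightarrow> 'e \<Rightarrow> 'e)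
    \<Rightarrow> (nat \<Rightarrow> nat \<Rightarrow> 'r) \<Rightarrow> nat \<Rightarrow> nat \<Rightarrow> nat \<Rightarrow> bool" where
  "partition_regular N z add sc A k l r \<longleftrightarrow>
     (\<forall>\<chi> :: 'e \<Rightarrow> nat. \<chi> ` N \<subseteq> {1..r} \<longrightarrow>
        (\<exists>n :: nat \<Rightarrow> 'e. (\<forall>j<l. n j \<in> N)
            \<and> (\<forall>i<k. lincomb add z sc A i n l = z)
            \<and> (\<exists>j<l. n j \<noteq> z)
            \<and> (\<exists>c. \<forall>j<l. \<chi> (n j) = c)))"

definition mult_subset :: "'r::comm_ring_1 set \<Rightarrow> bool" where
  "mult_subset S \<longleftrightarrow> 1 \<in> S \<and> (\<forall>s\<in>S. \<forall>t\<in>S. s * t \<in> S)"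

text \<open>Localization S^{-1}M of a module M (the whole type 'm with scalar multiplication
  scale) at a multiplicative subset S: classes of pairs (m, s), s in S, under
  (m,s) ~ (m',s') iff t (s' m - s m') = 0 for some t in S.\<close>

definition loc_rel :: "('r::comm_ring_1 \<Rightarrow> 'm::ab_group_add \<Rightarrow> 'm) \<Rightarrow> 'r set
    \<Rightarrow> (('m \<times> 'r) \<times> ('m \<times> 'r)) set" where
  "loc_rel scale S = {((m, s), (m', s')). s \<in> S \<and> s' \<in> S \<and>
      (\<exists>t\<in>S. scale t (scale s' m - scale s m') = 0)}"

definition loc_class :: "('r::comm_ring_1 \<Rightarrow> 'm::ab_group_add \<Rightarrow> 'm) \<Rightarrow> 'r set
    \<Rightarrow> 'm \<Rightarrow> 'r \<Rightarrow> ('m \<times> 'r) set" where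
  "loc_class scale S m s = loc_rel scale S `` {(m, s)}"

definition loc_carrier :: "('r::comm_ring_1 \<Rightarrow> 'm::ab_group_add \<Rightarrow> 'm) \<Rightarrow> 'r set
    \<Rightarrow> ('m \<times> 'r) set set" where
  "loc_carrier scale S = {loc_class scale S m s | m s. s \<in> S}"

definition loc_zero :: "('r::comm_ring_1 \<Rightarrow> 'm::ab_group_add \<Rightarrow> 'm) \<Rightarrow> 'r set
    \<Rightarrow> ('m \<times> 'r) set" where
  "loc_zero scale S = loc_class scale S 0 1"

definition loc_add :: "('r::comm_ring_1 \<Rightarrow> 'm::ab_group_add \<Rightarrow> 'm) \<Rightarrow> 'r set
    \<Rightarrow> ('m \<times> 'r) set \<Rightarrow> ('m \<times> 'r) set \<Rightarrow> ('m \<times> 'r) set" where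
  "loc_add scale S X Y =
     (let (m, s) = (SOME p. p \<in> X); (m', s') = (SOME p. p \<in> Y)
      in loc_class scale S (scale s' m + scale s m') (s * s'))"

definition loc_scale :: "('r::comm_ring_1 \<Rightarrow> 'm::ab_group_add \<Rightarrow> 'm) \<Rightarrow> 'r set
    \<Rightarrow> 'r \<Rightarrow> ('m \<times> 'r) set \<Rightarrow> ('m \<times> 'r) set" where
  "loc_scale scale S a X = (let (m, s) = (SOME p. p \<in> X) in loc_class scale S (scale a m) s)"

end

theory Submission
  imports Defs
begin

text \<open>Both parts are instances of one transfer principle for a module embedding M \<rightarrow> N in
  which every y \<in> N satisfies s y \<in> M for all s in some cone s_0 S (N = S^{-1}M, or N = K with
  S = R - {0}). Pulling a colouring of N back to M shows that partition regularity over M passes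
  to N. Conversely, given a colouring \<chi> of M, colour y \<in> N by the colour that \<chi>(s y) takes
  for almost all s, in the sense of an ultrafilter on S refining the cones. For a monochromatic
  solution n of this colouring, almost every s makes all \<chi>(s n_j) equal to its colour, and
  for such an s the vector s n is a monochromatic solution in M, nontrivial because S contains
  no zero divisors.\<close>

definition ultrafilter :: "'a filter \<Rightarrow> bool" where
  "ultrafilter U \<longleftrightarrow> U \<noteq> bot \<and> (\<forall>P. eventually P U \<or> eventually (\<lambda>x. \<not> P x) U)"

lemma Inf_chain_not_bot:
  fixes C :: "'a filter set"
  assumes "C \<noteq> {}" "bot \<notin> C" and chain: "\<And>F G. F \<in> C \<Longrightarrow> G \<in> C \<Longrightarrow> F \<le> G \<or> G \<le> F"
  shows "Inf C \<noteq> bot"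
proof -
  have "eventually P (Inf C) \<longleftrightarrow> (\<exists>F\<in>C. eventually P F)" for P
  proof (rule eventually_Inf_base)
    fix F G assume "F \<in> C" "G \<in> C"
    then consider "F \<le> G" | "G \<le> F" using chain by blast
    then show "\<exists>H\<in>C. H \<le> inf F G"
      using \<open>F \<in> C\<close> \<open>G \<in> C\<close> by cases auto
  qed (rule assms(1))
  from this[of "\<lambda>x. False"] show ?thesis
    using \<open>bot \<notin> C\<close> by (auto simp: eventually_False)
qed

lemma ultrafilter_exists:
  assumes "F \<noteq> bot"
  shows "\<exists>U\<le>F. ultrafilter U"
proof -
  let ?A = "{G. G \<noteq> bot \<and> G \<le> F}"
  \<comment> \<open>Finer filters are smaller, so Zorn's lemma is applied to the reversed order.\<close>
  have "\<exists>U\<in>?A. \<forall>G\<in>?A. G \<le> U \<longrightarrow> G = U"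
  proof (rule predicate_Zorn)
    show "partial_order_on ?A (relation_of (\<ge>) ?A)"
      by (rule partial_order_on_relation_ofI) auto
  next
    fix C assume C: "C \<in> Chains (relation_of (\<ge>) ?A)"
    show "\<exists>U\<in>?A. \<forall>G\<in>C. U \<le> G"
    proof (cases "C = {}")
      case True then show ?thesis using assms by auto
    next
      case False
      have "C \<subseteq> ?A" using C by (rule Chains_relation_of)
      moreover have "G \<le> H \<or> H \<le> G" if "G \<in> C" "H \<in> C" for G H
        using C that unfolding Chains_def relation_of_def by auto
      ultimately have "Inf C \<in> ?A"
        using False Inf_chain_not_bot[of C] by (auto intro: Inf_lower2)
      then show ?thesis by (auto intro: Inf_lower)
    qed
  qed
  then obtain U where U: "U \<noteq> bot" "U \<le> F" and max: "\<And>G. G \<noteq> bot \<Longrightarrow> G \<le> U \<Longrightarrow> G = U"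
    by (auto intro: order_trans)
  have "eventually P U \<or> eventually (\<lambda>x. \<not> P x) U" for P
  proof (rule disjCI)
    assume "\<not> eventually (\<lambda>x. \<not> P x) U"
    then have "inf U (principal {x. P x}) \<noteq> bot"
      by (simp add: trivial_limit_def eventually_inf_principal)
    then have "inf U (principal {x. P x}) = U"
      using max by simp
    moreover have "eventually P (inf U (principal {x. P x}))"
      by (simp add: eventually_inf_principal)
    ultimately show "eventually P U" by simp
  qed
  then show ?thesis
    using U unfolding ultrafilter_def by auto
qed

lemma ultrafilter_finite_range:
  assumes U: "ultrafilter U" and "finite C" and "eventually (\<lambda>x. g x \<in> C) U"
  shows "\<exists>c\<in>C. eventually (\<lambda>x. g x = c) U"
  using assms(2,3)
proof (induction C rule: finite_induct)
  case empty
  then show ?case using U by (simp add: ultrafilter_def trivial_limit_def)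
next
  case (insert c C)
  show ?case
  proof (cases "eventually (\<lambda>x. g x = c) U")
    case False
    then have "eventually (\<lambda>x. g x \<noteq> c) U" using U by (auto simp: ultrafilter_def)
    with insert.prems have "eventually (\<lambda>x. g x \<in> C) U"
      by eventually_elim auto
    then show ?thesis using insert.IH by auto
  qed auto
qed

lemma ultrafilter_limit_colouring:
  assumes U: "ultrafilter U" and "finite C" and in_C: "\<And>y. y \<in> Y \<Longrightarrow> eventually (\<lambda>s. g s y \<in> C) U"
  obtains \<chi> where "\<chi> ` Y \<subseteq> C" and "\<And>y. y \<in> Y \<Longrightarrow> eventually (\<lambda>s. g s y = \<chi> y) U"
proof -
  define \<chi> where "\<chi> y = (SOME c. c \<in> C \<and> eventually (\<lambda>s. g s y = c) U)" for y
  have \<chi>: "\<chi> y \<in> C \<and> eventually (\<lambda>s. g s y = \<chi> y) U" if "y \<in> Y" for y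
  proof -
    have "\<exists>c. c \<in> C \<and> eventually (\<lambda>s. g s y = c) U"
      using ultrafilter_finite_range[OF U \<open>finite C\<close> in_C[OF that]] by blast
    then show ?thesis
      unfolding \<chi>_def by (rule someI_ex)
  qed
  then have "\<chi> ` Y \<subseteq> C"
    by (simp add: image_subset_iff)
  with \<chi> show ?thesis
    using that by blast
qed

definition nontrivial_solution :: "'e set \<Rightarrow> 'e \<Rightarrow> ('e \<Rightarrow> 'e \<Rightarrow> 'e) \<Rightarrow> ('r \<Rightarrow> 'e \<Rightarrow> 'e)
    \<Rightarrow> (nat \<Rightarrow> nat \<Rightarrow> 'r) \<Rightarrow> nat \<Rightarrow> nat \<Rightarrow> (nat \<Rightarrow> 'e) \<Rightarrow> bool" where
  "nontrivial_solution N z add sc A k l n \<longleftrightarrow>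
     (\<forall>j<l. n j \<in> N) \<and> (\<forall>i<k. lincomb add z sc A i n l = z) \<and> (\<exists>j<l. n j \<noteq> z)"

lemma partition_regular_iff_nontrivial_solution:
  "partition_regular N z add sc A k l r \<longleftrightarrow>
     (\<forall>\<chi>. \<chi> ` N \<subseteq> {1..r} \<longrightarrow>
        (\<exists>n c. nontrivial_solution N z add sc A k l n \<and> (\<forall>j<l. \<chi> (n j) = c)))"
  unfolding partition_regular_def nontrivial_solution_def by (simp add: conj_assoc)

lemma lincomb_cong:
  "(\<And>j. j < l \<Longrightarrow> n j = n' j) \<Longrightarrow> lincomb add z sc A i n l = lincomb add z sc A i n' l"
  unfolding lincomb_def by (rule foldr_cong) auto

lemma nontrivial_solution_cong:
  assumes "\<And>j. j < l \<Longrightarrow> n j = n' j"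
  shows "nontrivial_solution N z add sc A k l n \<longleftrightarrow> nontrivial_solution N z add sc A k l n'"
proof -
  have "lincomb add z sc A i n l = lincomb add z sc A i n' l" for i
    using assms by (rule lincomb_cong)
  then show ?thesis
    using assms unfolding nontrivial_solution_def by auto
qed

locale module_embedding =
  fixes N :: "'a set" and z :: 'a and add :: "'a \<Rightarrow> 'a \<Rightarrow> 'a" and sc :: "'r \<Rightarrow> 'a \<Rightarrow> 'a"
    and N' :: "'b set" and z' :: 'b and add' :: "'b \<Rightarrow> 'b \<Rightarrow> 'b" and sc' :: "'r \<Rightarrow> 'b \<Rightarrow> 'b"
    and f :: "'a \<Rightarrow> 'b"
  assumes zero_closed: "z \<in> N"
    and add_closed: "x \<in> N \<Longrightarrow> y \<in> N \<Longrightarrow> add x y \<in> N"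
    and scale_closed: "x \<in> N \<Longrightarrow> sc a x \<in> N"
    and map_closed: "x \<in> N \<Longrightarrow> f x \<in> N'"
    and map_zero: "f z = z'"
    and map_add: "x \<in> N \<Longrightarrow> y \<in> N \<Longrightarrow> f (add x y) = add' (f x) (f y)"
    and map_scale: "x \<in> N \<Longrightarrow> f (sc a x) = sc' a (f x)"
    and map_eq_zero: "x \<in> N \<Longrightarrow> f x = z' \<Longrightarrow> x = z"
begin

lemma foldr_lincomb_closed:
  "\<forall>j\<in>set js. n j \<in> N \<Longrightarrow> foldr (\<lambda>j. add (sc (A i j) (n j))) js z \<in> N"
  by (induction js) (auto simp: zero_closed add_closed scale_closed)

lemma map_foldr_lincomb:
  "\<forall>j\<in>set js. n j \<in> N \<Longrightarrow>
    f (foldr (\<lambda>j. add (sc (A i j) (n j))) js z) = foldr (\<lambda>j. add' (sc' (A i j) (f (n j)))) js z'"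
  by (induction js) (simp_all add: map_zero map_add map_scale scale_closed foldr_lincomb_closed)

lemma lincomb_closed: "\<forall>j<l. n j \<in> N \<Longrightarrow> lincomb add z sc A i n l \<in> N"
  unfolding lincomb_def by (rule foldr_lincomb_closed) simp

lemma map_lincomb:
  "\<forall>j<l. n j \<in> N \<Longrightarrow> f (lincomb add z sc A i n l) = lincomb add' z' sc' A i (f \<circ> n) l"
  unfolding lincomb_def by (simp add: map_foldr_lincomb)

lemma nontrivial_solution_map_iff:
  assumes n: "\<forall>j<l. n j \<in> N"
  shows "nontrivial_solution N' z' add' sc' A k l (f \<circ> n) \<longleftrightarrow> nontrivial_solution N z add sc A k l n"
proof -
  have "x \<in> N \<Longrightarrow> f x = z' \<longleftrightarrow> x = z" for x
    using map_zero map_eq_zero by blast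
  with n show ?thesis
    unfolding nontrivial_solution_def
    by (auto simp: map_closed map_lincomb[symmetric] lincomb_closed)
qed

lemma nontrivial_solution_pullback:
  assumes emb: "module_embedding N' z' add' sc' N' z' add' sc' g"
    and n: "nontrivial_solution N' z' add' sc' A k l n" and g_n: "\<forall>j<l. g (n j) \<in> f ` N"
  shows "nontrivial_solution N z add sc A k l (\<lambda>j. inv_into N f (g (n j)))"
proof -
  have "\<forall>j<l. n j \<in> N'"
    using n by (simp add: nontrivial_solution_def)
  then have "nontrivial_solution N' z' add' sc' A k l (g \<circ> n)"
    using module_embedding.nontrivial_solution_map_iff[OF emb] n by simp
  also have "?this \<longleftrightarrow> nontrivial_solution N' z' add' sc' A k l (f \<circ> (\<lambda>j. inv_into N f (g (n j))))"
    by (rule nontrivial_solution_cong) (simp add: g_n f_inv_into_f)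
  also have "\<dots> \<longleftrightarrow> nontrivial_solution N z add sc A k l (\<lambda>j. inv_into N f (g (n j)))"
    using g_n by (intro nontrivial_solution_map_iff) (auto intro: inv_into_into)
  finally show ?thesis .
qed

lemma partition_regular_image:
  assumes "partition_regular N z add sc A k l r"
  shows "partition_regular N' z' add' sc' A k l r"
  unfolding partition_regular_iff_nontrivial_solution
proof (intro allI impI)
  fix \<chi> assume "\<chi> ` N' \<subseteq> {1..r}"
  then have "(\<chi> \<circ> f) ` N \<subseteq> {1..r}"
    using map_closed by auto
  then obtain n c where n: "nontrivial_solution N z add sc A k l n" and "\<forall>j<l. (\<chi> \<circ> f) (n j) = c"
    using assms[unfolded partition_regular_iff_nontrivial_solution, rule_format] by blast
  moreover have "nontrivial_solution N' z' add' sc' A k l (f \<circ> n)"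
    using n nontrivial_solution_map_iff[of l n] by (simp add: nontrivial_solution_def)
  ultimately show "\<exists>n c. nontrivial_solution N' z' add' sc' A k l n \<and> (\<forall>j<l. \<chi> (n j) = c)"
    by auto
qed

lemma partition_regular_preimage:
  assumes "F \<noteq> bot"
    and denominators: "\<And>y. y \<in> N' \<Longrightarrow> eventually (\<lambda>s. sc' s y \<in> f ` N) F"
    and embedding: "eventually (\<lambda>s. module_embedding N' z' add' sc' N' z' add' sc' (sc' s)) F"
    and PR: "partition_regular N' z' add' sc' A k l r"
  shows "partition_regular N z add sc A k l r"
  unfolding partition_regular_iff_nontrivial_solution
proof (intro allI impI)
  fix \<chi> assume \<chi>: "\<chi> ` N \<subseteq> {1..r}"
  obtain U where "U \<le> F" and U: "ultrafilter U"
    using ultrafilter_exists[OF \<open>F \<noteq> bot\<close>] by blast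
  have denominators_U: "eventually (\<lambda>s. sc' s y \<in> f ` N) U" if "y \<in> N'" for y
    using \<open>U \<le> F\<close> denominators[OF that] by (rule filter_leD)
  define pull where "pull s y = \<chi> (inv_into N f (sc' s y))" for s y
  have "pull s y \<in> {1..r}" if "sc' s y \<in> f ` N" for s y
    unfolding pull_def by (rule subsetD[OF \<chi> imageI[OF inv_into_into[OF that]]])
  then have "eventually (\<lambda>s. pull s y \<in> {1..r}) U" if "y \<in> N'" for y
    using denominators_U[OF that] by (auto elim: eventually_mono)
  then obtain \<chi>' where "\<chi>' ` N' \<subseteq> {1..r}"
    and pull: "\<And>y. y \<in> N' \<Longrightarrow> eventually (\<lambda>s. pull s y = \<chi>' y) U"
    using ultrafilter_limit_colouring[OF U finite_atLeastAtMost] by blast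
  then obtain n c where n: "nontrivial_solution N' z' add' sc' A k l n" and col: "\<forall>j<l. \<chi>' (n j) = c"
    using PR[unfolded partition_regular_iff_nontrivial_solution, rule_format] by blast
  have "eventually (\<lambda>s. \<forall>j\<in>{..<l}. sc' s (n j) \<in> f ` N \<and> pull s (n j) = c) U"
  proof (intro eventually_ball_finite ballI)
    fix j assume "j \<in> {..<l}"
    then have "n j \<in> N'" and "\<chi>' (n j) = c"
      using n col unfolding nontrivial_solution_def by auto
    then show "eventually (\<lambda>s. sc' s (n j) \<in> f ` N \<and> pull s (n j) = c) U"
      using denominators_U pull by (auto intro: eventually_conj)
  qed simp
  moreover have "eventually (\<lambda>s. module_embedding N' z' add' sc' N' z' add' sc' (sc' s)) U"
    using \<open>U \<le> F\<close> embedding by (rule filter_leD)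
  ultimately have "eventually (\<lambda>s. (\<forall>j\<in>{..<l}. sc' s (n j) \<in> f ` N \<and> pull s (n j) = c) \<and>
      module_embedding N' z' add' sc' N' z' add' sc' (sc' s)) U"
    by (rule eventually_conj)
  moreover have "U \<noteq> bot"
    using U by (simp add: ultrafilter_def)
  ultimately obtain s where s: "\<forall>j<l. sc' s (n j) \<in> f ` N \<and> pull s (n j) = c"
    and "module_embedding N' z' add' sc' N' z' add' sc' (sc' s)"
    using eventually_happens' by fastforce
  then have "nontrivial_solution N z add sc A k l (\<lambda>j. inv_into N f (sc' s (n j)))"
    using n by (auto intro: nontrivial_solution_pullback)
  moreover have "\<forall>j<l. \<chi> (inv_into N f (sc' s (n j))) = c"
    using s by (simp add: pull_def)
  ultimately show "\<exists>m c. nontrivial_solution N z add sc A k l m \<and> (\<forall>j<l. \<chi> (m j) = c)"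
    by blast
qed

lemma partition_regular_iff:
  assumes "F \<noteq> bot"
    and "\<And>y. y \<in> N' \<Longrightarrow> eventually (\<lambda>s. sc' s y \<in> f ` N) F"
    and "eventually (\<lambda>s. module_embedding N' z' add' sc' N' z' add' sc' (sc' s)) F"
  shows "partition_regular N z add sc A k l r \<longleftrightarrow> partition_regular N' z' add' sc' A k l r"
  using partition_regular_image partition_regular_preimage[OF assms] by blast

end

definition cone_filter :: "'r::comm_ring_1 set \<Rightarrow> 'r filter" where
  "cone_filter S = (INF s\<in>S. principal ((*) s ` S))"

lemma eventually_cone_filter:
  assumes "mult_subset S"
  shows "eventually P (cone_filter S) \<longleftrightarrow> (\<exists>s\<in>S. \<forall>t\<in>S. P (s * t))"
  unfolding cone_filter_def
proof (subst eventually_INF_base)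
  show "S \<noteq> {}"
    using assms unfolding mult_subset_def by blast
  fix a b assume "a \<in> S" "b \<in> S"
  have "a * b * t \<in> (*) a ` S \<inter> (*) b ` S" if "t \<in> S" for t
  proof -
    have "a * b * t = a * (b * t)" "a * b * t = b * (a * t)"
      by (simp_all add: ac_simps)
    then show ?thesis
      using assms \<open>a \<in> S\<close> \<open>b \<in> S\<close> \<open>t \<in> S\<close> unfolding mult_subset_def by blast
  qed
  moreover have "a * b \<in> S"
    using assms \<open>a \<in> S\<close> \<open>b \<in> S\<close> unfolding mult_subset_def by blast
  ultimately show "\<exists>c\<in>S. principal ((*) c ` S) \<le> inf (principal ((*) a ` S)) (principal ((*) b ` S))"
    by (intro bexI[of _ "a * b"]) (auto simp: image_subset_iff)
qed (simp add: eventually_principal)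

lemma cone_filter_ne_bot: "mult_subset S \<Longrightarrow> cone_filter S \<noteq> bot"
  by (auto simp: eventually_cone_filter mult_subset_def simp flip: eventually_False)

locale localization = module scale for scale :: "'r::comm_ring_1 \<Rightarrow> 'm::ab_group_add \<Rightarrow> 'm" +
  fixes S :: "'r set"
  assumes mult_subset: "mult_subset S"
    and no_zero_divisors: "s \<in> S \<Longrightarrow> scale s m = 0 \<Longrightarrow> m = 0"
begin

lemma one_in_S: "1 \<in> S" and mult_in_S: "s \<in> S \<Longrightarrow> t \<in> S \<Longrightarrow> s * t \<in> S"
  using mult_subset unfolding mult_subset_def by auto

lemma scale_cancel: "s \<in> S \<Longrightarrow> scale s x = scale s y \<Longrightarrow> x = y"
  using no_zero_divisors[of s "x - y"] by (simp add: scale_right_diff_distrib)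

lemma scale_commute: "scale a (scale b x) = scale b (scale a x)"
  by (simp add: mult.commute)

lemma mem_loc_rel_iff:
  "((m, s), (m', s')) \<in> loc_rel scale S \<longleftrightarrow> s \<in> S \<and> s' \<in> S \<and> scale s' m = scale s m'"
proof -
  have "(\<exists>t\<in>S. scale t x = 0) \<longleftrightarrow> x = 0" for x
    using no_zero_divisors one_in_S by (metis scale_zero_right)
  then show ?thesis
    by (simp add: loc_rel_def)
qed

lemma equiv_loc_rel: "equiv (UNIV \<times> S) (loc_rel scale S)"
proof (rule equivI)
  show "trans (loc_rel scale S)"
  proof (rule transI, clarify)
    fix m s m' s' m'' s''
    assume "((m, s), (m', s')) \<in> loc_rel scale S" "((m', s'), (m'', s'')) \<in> loc_rel scale S"
    then have S: "s \<in> S" "s' \<in> S" "s'' \<in> S"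
      and e: "scale s' m = scale s m'" "scale s'' m' = scale s' m''"
      by (auto simp: mem_loc_rel_iff)
    have "scale s' (scale s'' m) = scale s'' (scale s' m)"
      by (rule scale_commute)
    also have "\<dots> = scale s'' (scale s m')"
      by (simp only: e(1))
    also have "\<dots> = scale s (scale s'' m')"
      by (rule scale_commute)
    also have "\<dots> = scale s (scale s' m'')"
      by (simp only: e(2))
    also have "\<dots> = scale s' (scale s m'')"
      by (rule scale_commute)
    finally have "scale s'' m = scale s m''"
      by (rule scale_cancel[OF S(2)])
    then show "((m, s), (m'', s'')) \<in> loc_rel scale S"
      using S by (simp add: mem_loc_rel_iff)
  qed
qed (auto simp: mem_loc_rel_iff refl_on_def sym_def)

lemma loc_class_eq_iff:
  "s \<in> S \<Longrightarrow> s' \<in> S \<Longrightarrow> loc_class scale S m s = loc_class scale S m' s' \<longleftrightarrow> scale s' m = scale s m'"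
  unfolding loc_class_def using equiv_loc_rel by (simp add: eq_equiv_class_iff mem_loc_rel_iff)

lemma loc_class_representative:
  assumes "s \<in> S"
  obtains m' s' where "(SOME p. p \<in> loc_class scale S m s) = (m', s')"
    and "s' \<in> S" and "scale s' m = scale s m'"
proof -
  have "(m, s) \<in> loc_class scale S m s"
    unfolding loc_class_def using assms by (simp add: mem_loc_rel_iff)
  then have "(SOME p. p \<in> loc_class scale S m s) \<in> loc_class scale S m s"
    by (rule someI)
  moreover obtain m' s' where "(SOME p. p \<in> loc_class scale S m s) = (m', s')"
    by (cases "SOME p. p \<in> loc_class scale S m s")
  ultimately show ?thesis
    using that unfolding loc_class_def by (auto simp: mem_loc_rel_iff)
qed

lemma loc_add_class:
  assumes "s \<in> S" "s' \<in> S"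
  shows "loc_add scale S (loc_class scale S m s) (loc_class scale S m' s') =
    loc_class scale S (scale s' m + scale s m') (s * s')"
proof -
  obtain m1 s1 m2 s2 where
      rep: "(SOME p. p \<in> loc_class scale S m s) = (m1, s1)"
        "(SOME p. p \<in> loc_class scale S m' s') = (m2, s2)"
      and S: "s1 \<in> S" "s2 \<in> S" and e: "scale s1 m = scale s m1" "scale s2 m' = scale s' m2"
    using loc_class_representative assms by metis
  have "scale (s * s') (scale s2 m1) = scale (s2 * s') (scale s m1)"
    by (simp add: ac_simps)
  also have "\<dots> = scale (s1 * s2) (scale s' m)"
    by (simp add: e(1)[symmetric] ac_simps)
  finally have left: "scale (s * s') (scale s2 m1) = scale (s1 * s2) (scale s' m)" .
  have "scale (s * s') (scale s1 m2) = scale (s * s1) (scale s' m2)"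
    by (simp add: ac_simps)
  also have "\<dots> = scale (s1 * s2) (scale s m')"
    by (simp add: e(2)[symmetric] ac_simps)
  finally have right: "scale (s * s') (scale s1 m2) = scale (s1 * s2) (scale s m')" .
  show ?thesis
    unfolding loc_add_def rep using assms S left right
    by (simp add: loc_class_eq_iff mult_in_S scale_right_distrib)
qed

lemma loc_scale_class:
  assumes "s \<in> S"
  shows "loc_scale scale S a (loc_class scale S m s) = loc_class scale S (scale a m) s"
proof -
  obtain m1 s1 where rep: "(SOME p. p \<in> loc_class scale S m s) = (m1, s1)"
      and "s1 \<in> S" and e: "scale s1 m = scale s m1"
    using loc_class_representative assms by metis
  have "scale s (scale a m1) = scale s1 (scale a m)"
    by (metis e scale_commute)
  then show ?thesis
    unfolding loc_scale_def rep using assms \<open>s1 \<in> S\<close> by (simp add: loc_class_eq_iff)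
qed

lemma loc_carrierE:
  assumes "X \<in> loc_carrier scale S"
  obtains m s where "s \<in> S" and "X = loc_class scale S m s"
  using assms unfolding loc_carrier_def by blast

lemma loc_class_in_carrier: "s \<in> S \<Longrightarrow> loc_class scale S m s \<in> loc_carrier scale S"
  unfolding loc_carrier_def by blast

lemma module_embedding_loc_class:
  "module_embedding UNIV 0 (+) scale
    (loc_carrier scale S) (loc_zero scale S) (loc_add scale S) (loc_scale scale S)
    (\<lambda>m. loc_class scale S m 1)"
proof unfold_locales
  fix m assume "loc_class scale S m 1 = loc_zero scale S"
  then show "m = 0"
    unfolding loc_zero_def by (simp add: loc_class_eq_iff one_in_S)
qed (simp_all add: loc_class_in_carrier loc_zero_def loc_add_class loc_scale_class one_in_S)

lemma module_embedding_loc_scale: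
  assumes "s \<in> S"
  shows "module_embedding
    (loc_carrier scale S) (loc_zero scale S) (loc_add scale S) (loc_scale scale S)
    (loc_carrier scale S) (loc_zero scale S) (loc_add scale S) (loc_scale scale S)
    (loc_scale scale S s)"
proof unfold_locales
  fix X assume "X \<in> loc_carrier scale S" "loc_scale scale S s X = loc_zero scale S"
  then obtain m t where "t \<in> S" "X = loc_class scale S m t" "scale s m = 0"
    by (auto elim!: loc_carrierE simp: loc_zero_def loc_scale_class loc_class_eq_iff one_in_S)
  moreover have "m = 0"
    using assms \<open>scale s m = 0\<close> by (rule no_zero_divisors)
  ultimately show "X = loc_zero scale S"
    by (simp add: loc_zero_def loc_class_eq_iff one_in_S)
qed (auto elim!: loc_carrierE simp: loc_zero_def loc_add_class loc_scale_class loc_class_in_carrier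
      one_in_S mult_in_S scale_right_distrib ac_simps)

lemma loc_denominators:
  assumes "X \<in> loc_carrier scale S"
  shows "eventually (\<lambda>s. loc_scale scale S s X \<in> range (\<lambda>m. loc_class scale S m 1)) (cone_filter S)"
proof -
  obtain m s where "s \<in> S" and X: "X = loc_class scale S m s"
    using assms by (rule loc_carrierE)
  have "loc_scale scale S (s * t) X = loc_class scale S (scale t m) 1" if "t \<in> S" for t
    using \<open>s \<in> S\<close> by (simp add: X loc_scale_class loc_class_eq_iff one_in_S)
  then show ?thesis
    using \<open>s \<in> S\<close> by (auto simp: eventually_cone_filter[OF mult_subset])
qed

theorem partition_regular_localization:
  "partition_regular UNIV 0 (+) scale A k l r \<longleftrightarrow>
    partition_regular (loc_carrier scale S) (loc_zero scale S) (loc_add scale S) (loc_scale scale S)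
      A k l r"
proof (rule module_embedding.partition_regular_iff[OF module_embedding_loc_class])
  show "cone_filter S \<noteq> bot"
    using mult_subset by (rule cone_filter_ne_bot)
  show "eventually (\<lambda>s. module_embedding
      (loc_carrier scale S) (loc_zero scale S) (loc_add scale S) (loc_scale scale S)
      (loc_carrier scale S) (loc_zero scale S) (loc_add scale S) (loc_scale scale S)
      (loc_scale scale S s)) (cone_filter S)"
    using module_embedding_loc_scale mult_in_S one_in_S
    by (auto simp: eventually_cone_filter[OF mult_subset])
qed (rule loc_denominators)

end

lemma mult_subset_nonzero: "mult_subset {s :: 'd::idom. s \<noteq> 0}"
  unfolding mult_subset_def by simp

lemma module_embedding_Fract:
  "module_embedding UNIV 0 (+) (*) UNIV 0 (+) (\<lambda>a q. Fract a 1 * q) (\<lambda>a :: 'd::idom. Fract a 1)"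
  by unfold_locales (simp_all add: Zero_fract_def eq_fract)

lemma module_embedding_Fract_mult:
  fixes s :: "'d::idom"
  assumes "s \<noteq> 0"
  shows "module_embedding UNIV 0 (+) (\<lambda>a q. Fract a 1 * q) UNIV 0 (+) (\<lambda>a q. Fract a 1 * q)
    (\<lambda>q. Fract s 1 * q)"
proof -
  have "Fract s 1 \<noteq> 0"
    using assms by (simp add: Zero_fract_def eq_fract)
  then show ?thesis
    by unfold_locales (simp_all add: algebra_simps)
qed

lemma Fract_denominators:
  "eventually (\<lambda>s. Fract s 1 * q \<in> range (\<lambda>a :: 'd::idom. Fract a 1)) (cone_filter {s. s \<noteq> 0})"
proof -
  obtain a b :: 'd where q: "q = Fract a b" and "b \<noteq> 0"
    by (cases q) auto
  then have "Fract (b * t) 1 * q = Fract (t * a) 1" for t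
    by (simp add: eq_fract)
  then show ?thesis
    using \<open>b \<noteq> 0\<close> by (auto simp: eventually_cone_filter[OF mult_subset_nonzero])
qed

theorem partition_regular_Fract:
  "partition_regular (UNIV :: 'd::idom set) 0 (+) (*) A k l r \<longleftrightarrow>
    partition_regular (UNIV :: 'd fract set) 0 (+) (\<lambda>a q. Fract a 1 * q) A k l r"
proof (rule module_embedding.partition_regular_iff[OF module_embedding_Fract])
  show "cone_filter {s :: 'd. s \<noteq> 0} \<noteq> bot"
    using mult_subset_nonzero by (rule cone_filter_ne_bot)
  show "eventually (\<lambda>s. module_embedding UNIV 0 (+) (\<lambda>a q. Fract a 1 * q) UNIV 0 (+)
      (\<lambda>a q. Fract a 1 * q) (\<lambda>q. Fract s 1 * q)) (cone_filter {s :: 'd. s \<noteq> 0})"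
    unfolding eventually_cone_filter[OF mult_subset_nonzero]
    using module_embedding_Fract_mult by (intro bexI[of _ 1]) auto
qed (rule Fract_denominators)

theorem proposition1p5:
  shows "(\<forall>(scale :: 'r::comm_ring_1 \<Rightarrow> 'm::ab_group_add \<Rightarrow> 'm) (S :: 'r set)
            (A :: nat \<Rightarrow> nat \<Rightarrow> 'r) (k :: nat) (l :: nat) (r :: nat).
            module scale \<and> mult_subset S \<and> (\<forall>s\<in>S. \<forall>m. scale s m = 0 \<longrightarrow> m = 0) \<and> r \<ge> 1
            \<longrightarrow> (partition_regular UNIV 0 (+) scale A k l r \<longleftrightarrow>
                 partition_regular (loc_carrier scale S) (loc_zero scale S) (loc_add scale S)
                   (loc_scale scale S) A k l r))
       \<and> (\<forall>(A :: nat \<Rightarrow> nat \<Rightarrow> 'd::idom) (k :: nat) (l :: nat) (r :: nat).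
            r \<ge> 1 \<longrightarrow>
            (partition_regular (UNIV :: 'd set) 0 (+) (*) A k l r \<longleftrightarrow>
             partition_regular (UNIV :: 'd fract set) 0 (+) (\<lambda>a q. Fract a 1 * q) A k l r))"
proof (intro conjI allI impI)
  fix scale :: "'r \<Rightarrow> 'm \<Rightarrow> 'm" and S :: "'r set" and A :: "nat \<Rightarrow> nat \<Rightarrow> 'r" and k l r :: nat
  assume "module scale \<and> mult_subset S \<and> (\<forall>s\<in>S. \<forall>m. scale s m = 0 \<longrightarrow> m = 0) \<and> r \<ge> 1"
  then interpret localization scale S
    by (auto intro!: localization.intro localization_axioms.intro)
  show "partition_regular UNIV 0 (+) scale A k l r \<longleftrightarrow>
      partition_regular (loc_carrier scale S) (loc_zero scale S) (loc_add scale S)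
        (loc_scale scale S) A k l r"
    by (rule partition_regular_localization)
qed (rule partition_regular_Fract)

end
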